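(* Let $C\subset\mathbb R^3$ be a non-closed embedded curve of length $l>0$ with nowhere vanishing curvature and orientation-compatible arc-length parametrization $\mathbf c:[-l/2,l/2]\to\mathbb R^3$, and let $F\in\mathcal D_*(C)$ be a normal form with $F(s,0)=\mathbf c(s)$. Then at each point of $C$ the ruling direction of the inverse $F_*$ is linearly independent of that of $F$, i.e. $\xi_F(s)$ and $\xi_{F_*}(-s)$ are linearly independent for every $s$. In particular, $F(\Omega_\epsilon)\cap F_*(\Omega_\epsilon)=C$ for all sufficiently small $\epsilon>0$.
   Context: $-C$ is $C$ with the opposite orientation; $\kappa$ is the curvature of $\mathbf c$; $\Omega_\epsilon:=[-l/2,l/2]\times(-\epsilon,\epsilon)$. A developable strip along $C$ is the germ of a $C^\infty$ embedding $f(u,v)=f(u,0)+v\,\xi_f(u)$ with $\mathbf c_f(u)=f(u,0)$ parametrizing $C$, $\xi_f$ unit (the ruling vector field), and zero Gaussian curvature; with the Frenet frame $(\mathbf e,\mathbf n,\mathbf b)$ of $\mathbf c_f$ write $\xi_f=\cos\beta_f\,\mathbf e+\sin\beta_f(\cos\alpha_f\,\mathbf n+\sin\alpha_f\,\mathbf b)$. $\mathcal D(C)$: strips with $\mathbf c_f$ inducing the orientation of $C$ and $0<|\cos\alpha_f|<1$, normalized by $0<|\alpha_f|<\pi/2$ (first angular function), $0<\beta_f<\pi$. Geodesic curvature $\mu_f=\kappa_f\cos\alpha_f$; admissible ($\in\mathcal D_*(C)$) if $\mu_f<\min\kappa_f$ everywhere. A normal form is such a strip $F(s,v)$ defined near $[-l/2,l/2]\times\{0\}$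 with $s\mapsto F(s,0)$ an arc-length parametrization of $C$ (either orientation); it is determined by that parametrization and its first angular function, which can be any smooth function into $(-\pi/2,\pi/2)\setminus\{0\}$. Inverse: $F_*\in\mathcal D_*(-C)$ is the normal form with $F_*(s,0)=\mathbf c(-s)$ whose first angular function (w.r.t. the Frenet frame of $s\mapsto\mathbf c(-s)$) has the same sign as $\alpha_F(s)$ and satisfies $\kappa(-s)\cos\alpha_{F_*}(s)=\kappa(s)\cos\alpha_F(s)$. *)

theory Defs
  imports "HOL-Analysis.Analysis"
begin

definition cderiv :: "(real \<Rightarrow> 'a::real_normed_vector) \<Rightarrow> real \<Rightarrow> 'a" where
  "cderiv g = (\<lambda>t. vector_derivative g (at t))"

definition smooth_curve_on :: "real set \<Rightarrow> (real \<Rightarrow> 'a::real_normed_vector) \<Rightarrow> bool" where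
  "smooth_curve_on S g \<longleftrightarrow>
     (\<forall>k. continuous_on S ((cderiv ^^ k) g) \<and> (\<forall>t\<in>S. ((cderiv ^^ k) g) differentiable (at t)))"

definition pu :: "(real \<times> real \<Rightarrow> 'a::real_normed_vector) \<Rightarrow> real \<times> real \<Rightarrow> 'a" where
  "pu f = (\<lambda>p. vector_derivative (\<lambda>u. f (u, snd p)) (at (fst p)))"

definition pv :: "(real \<times> real \<Rightarrow> 'a::real_normed_vector) \<Rightarrow> real \<times> real \<Rightarrow> 'a" where
  "pv f = (\<lambda>p. vector_derivative (\<lambda>v. f (fst p, v)) (at (snd p)))"

fun iter_partial :: "bool list \<Rightarrow> (real \<times> real \<Rightarrow> 'a::real_normed_vector) \<Rightarrow> real \<times> real \<Rightarrow> 'a" where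
  "iter_partial [] f = f"
| "iter_partial (d # ds) f = (if d then pu else pv) (iter_partial ds f)"

definition smooth2_on :: "(real \<times> real) set \<Rightarrow> (real \<times> real \<Rightarrow> 'a::real_normed_vector) \<Rightarrow> bool" where
  "smooth2_on U f \<longleftrightarrow>
     (\<forall>ds. continuous_on U (iter_partial ds f) \<and>
       (\<forall>p\<in>U. (\<lambda>u. iter_partial ds f (u, snd p)) differentiable (at (fst p)) \<and>
               (\<lambda>v. iter_partial ds f (fst p, v)) differentiable (at (snd p))))"

definition unit_normal :: "(real \<times> real \<Rightarrow> real^3) \<Rightarrow> real \<times> real \<Rightarrow> real^3" where
  "unit_normal f p = (1 / norm (cross3 (pu f p) (pv f p))) *\<^sub>R cross3 (pu f p) (pv f p)"

definition gauss_curv :: "(real \<times> real \<Rightarrow> real^3) \<Rightarrow> real \<times> real \<Rightarrow> real" where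
  "gauss_curv f p =
     (let fu = pu f p; fv = pv f p; \<nu> = unit_normal f p;
          E = fu \<bullet> fu; Fc = fu \<bullet> fv; G = fv \<bullet> fv;
          L = pu (pu f) p \<bullet> \<nu>; M = pv (pu f) p \<bullet> \<nu>; N = pv (pv f) p \<bullet> \<nu>
      in (L * N - M\<^sup>2) / (E * G - Fc\<^sup>2))"

definition ruling :: "(real \<times> real \<Rightarrow> real^3) \<Rightarrow> real \<Rightarrow> real^3" where
  "ruling F u = pv F (u, 0)"

text \<open>F (a total function; only its germ along I x {0} matters) is a developable strip along
  the parameter segment I: on some open neighbourhood U of I x {0} it is a C-infinity embedding
  (smooth, injective immersion, homeomorphism onto its image) of the ruled form
  F(u,v) = F(u,0) + v xi(u) with xi unit, and of zero Gaussian curvature.\<close>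
definition dev_strip :: "real set \<Rightarrow> (real \<times> real \<Rightarrow> real^3) \<Rightarrow> bool" where
  "dev_strip I F \<longleftrightarrow>
     (\<exists>U. open U \<and> (\<forall>u\<in>I. (u, 0) \<in> U) \<and> smooth2_on U F \<and>
        inj_on F U \<and> (\<exists>g. homeomorphism U (F ` U) F g) \<and>
        (\<forall>p\<in>U. \<exists>D. (F has_derivative D) (at p) \<and> inj D) \<and>
        (\<forall>u v. (u, v) \<in> U \<longrightarrow> (u, 0) \<in> U \<and> F (u, v) = F (u, 0) + v *\<^sub>R ruling F u
                                \<and> norm (ruling F u) = 1) \<and>
        (\<forall>p\<in>U. gauss_curv F p = 0))"

definition tangent :: "(real \<Rightarrow> real^3) \<Rightarrow> real \<Rightarrow> real^3" where
  "tangent c s = cderiv c s"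

definition curvature :: "(real \<Rightarrow> real^3) \<Rightarrow> real \<Rightarrow> real" where
  "curvature c s = norm (cderiv (cderiv c) s)"

definition principal_normal :: "(real \<Rightarrow> real^3) \<Rightarrow> real \<Rightarrow> real^3" where
  "principal_normal c s = (1 / curvature c s) *\<^sub>R cderiv (cderiv c) s"

definition binormal :: "(real \<Rightarrow> real^3) \<Rightarrow> real \<Rightarrow> real^3" where
  "binormal c s = cross3 (tangent c s) (principal_normal c s)"

definition frame_vec :: "(real \<Rightarrow> real^3) \<Rightarrow> real \<Rightarrow> real \<Rightarrow> real \<Rightarrow> real^3" where
  "frame_vec c s \<alpha> \<beta> = cos \<beta> *\<^sub>R tangent c s +
     sin \<beta> *\<^sub>R (cos \<alpha> *\<^sub>R principal_normal c s + sin \<alpha> *\<^sub>R binormal c s)"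

definition first_angle :: "(real \<Rightarrow> real^3) \<Rightarrow> (real \<times> real \<Rightarrow> real^3) \<Rightarrow> real \<Rightarrow> real" where
  "first_angle c F s = (THE \<alpha>. \<exists>\<beta>. 0 < \<beta> \<and> \<beta> < pi \<and> 0 < \<bar>\<alpha>\<bar> \<and> \<bar>\<alpha>\<bar> < pi / 2 \<and>
                                  ruling F s = frame_vec c s \<alpha> \<beta>)"

definition param_int :: "real \<Rightarrow> real set" where
  "param_int l = {-l/2 .. l/2}"

definition normal_form :: "real \<Rightarrow> (real \<Rightarrow> real^3) \<Rightarrow> (real \<times> real \<Rightarrow> real^3) \<Rightarrow> bool" where
  "normal_form l c F \<longleftrightarrow>
     dev_strip (param_int l) F \<and> (\<forall>s\<in>param_int l. F (s, 0) = c s) \<and>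
     (\<forall>s\<in>param_int l. \<exists>\<alpha> \<beta>. 0 < \<beta> \<and> \<beta> < pi \<and> 0 < \<bar>\<alpha>\<bar> \<and> \<bar>\<alpha>\<bar> < pi / 2 \<and>
                              ruling F s = frame_vec c s \<alpha> \<beta>)"

definition geod_curv :: "(real \<Rightarrow> real^3) \<Rightarrow> (real \<times> real \<Rightarrow> real^3) \<Rightarrow> real \<Rightarrow> real" where
  "geod_curv c F s = curvature c s * cos (first_angle c F s)"

text \<open>Admissible (D_* ): mu_F < min kappa everywhere.\<close>
definition admissible :: "real \<Rightarrow> (real \<Rightarrow> real^3) \<Rightarrow> (real \<times> real \<Rightarrow> real^3) \<Rightarrow> bool" where
  "admissible l c F \<longleftrightarrow> (\<forall>s\<in>param_int l. \<forall>t\<in>param_int l. geod_curv c F s < curvature c t)"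

definition is_inverse :: "real \<Rightarrow> (real \<Rightarrow> real^3) \<Rightarrow> (real \<times> real \<Rightarrow> real^3)
                          \<Rightarrow> (real \<times> real \<Rightarrow> real^3) \<Rightarrow> bool" where
  "is_inverse l c F Fs \<longleftrightarrow>
     normal_form l (\<lambda>s. c (- s)) Fs \<and>
     (\<forall>s\<in>param_int l.
        sgn (first_angle (\<lambda>t. c (- t)) Fs s) = sgn (first_angle c F s) \<and>
        curvature c (- s) * cos (first_angle (\<lambda>t. c (- t)) Fs s) =
          curvature c s * cos (first_angle c F s))"

definition Omega :: "real \<Rightarrow> real \<Rightarrow> (real \<times> real) set" where
  "Omega l \<epsilon> = Sigma (param_int l) (\<lambda>_. {-\<epsilon> <..< \<epsilon>})"

end

theory Submission
  imports Defs
begin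

(* In the Frenet frame (e, n, b) of c at s the ruling of F is
   cos \<beta> e + sin \<beta> (cos \<alpha> n + sin \<alpha> b), while the Frenet frame of the reversed curve at -s
   is (-e, n, -b). Hence det (e, \<xi>_F(s), \<xi>_F*(-s)) = - sin \<beta> sin \<beta>' sin (\<alpha> + \<alpha>'), which is
   nonzero because \<alpha>' = \<alpha>_F*(-s) has the sign of \<alpha>_F(-s), and \<alpha>_F has constant sign along C
   (\<xi>_F . b = sin \<beta> sin \<alpha>_F is continuous and never vanishes).
   For the intersection: by injectivity and compactness, a common point
   c(s) + v \<xi>_F(s) = c(u) + w \<xi>_F*(-u) with small |v|, |w| forces s, u to be close. If s \<noteq> u, the
   chord c(s) - c(u) is orthogonal to \<xi>_F(s) \<times> \<xi>_F*(-u), so by the mean value theorem some c'(r) with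
   r between s and u is too, contradicting the nonvanishing of the triple product near the diagonal;
   if s = u, linear independence gives v = 0. *)

lemma smooth_curve_on_iterated_derivative:
  assumes "smooth_curve_on S c" "t \<in> S"
  shows "((cderiv ^^ k) c has_vector_derivative (cderiv ^^ Suc k) c t) (at t)"
  using assms unfolding smooth_curve_on_def by (simp add: cderiv_def vector_derivative_works[symmetric])

lemma smooth_curve_on_continuous_on:
  assumes "smooth_curve_on S c"
  shows "continuous_on S ((cderiv ^^ k) c)"
  using assms unfolding smooth_curve_on_def by blast

lemma smooth_curve_on_derivatives:
  assumes "smooth_curve_on S c" "t \<in> S"
  shows "(c has_vector_derivative cderiv c t) (at t)"
    and "(cderiv c has_vector_derivative cderiv (cderiv c) t) (at t)"
  using smooth_curve_on_iterated_derivative[OF assms, of 0]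
    smooth_curve_on_iterated_derivative[OF assms, of 1] by simp_all

lemma unit_norm_orthogonal_derivative:
  fixes g :: "real \<Rightarrow> 'a::real_inner"
  assumes "a < b" "s \<in> {a..b}" "\<forall>x\<in>{a..b}. norm (g x) = 1"
    and "(g has_vector_derivative g') (at s)"
  shows "g s \<bullet> g' = 0"
proof -
  have "((\<lambda>x. g x \<bullet> g x) has_derivative (\<lambda>h. g s \<bullet> (h *\<^sub>R g') + (h *\<^sub>R g') \<bullet> g s)) (at s)"
    using has_derivative_inner assms(4) unfolding has_vector_derivative_def by blast
  then have "((\<lambda>x. g x \<bullet> g x) has_vector_derivative 2 * (g s \<bullet> g')) (at s)"
    unfolding has_vector_derivative_def
    by (rule has_derivative_eq_rhs) (auto simp: inner_commute algebra_simps)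
  then have "((\<lambda>x. g x \<bullet> g x) has_vector_derivative 2 * (g s \<bullet> g')) (at s within {a..b})"
    by (rule has_vector_derivative_at_within)
  moreover have "((\<lambda>x. g x \<bullet> g x) has_vector_derivative 0) (at s within {a..b})"
    by (rule has_vector_derivative_transform_within[where f="\<lambda>_. 1" and d=1])
       (use assms(2,3) in \<open>auto simp: norm_eq_1\<close>)
  ultimately have "2 * (g s \<bullet> g') = 0"
    using vector_derivative_unique_within_closed_interval assms(1,2) by (metis box_real(2))
  then show ?thesis by simp
qed

lemma sgn_sin:
  fixes x :: real
  assumes "\<bar>x\<bar> < pi"
  shows "sgn (sin x) = sgn x"
proof (cases x "0::real" rule: linorder_cases)
  case less
  then have "sin (- x) > 0" using assms by (intro sin_gt_zero) auto
  then show ?thesis using less by simp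
next
  case greater
  then have "sin x > 0" using assms by (intro sin_gt_zero) auto
  then show ?thesis using greater by simp
qed simp

lemma continuous_on_nonzero_sgn_eq:
  fixes \<phi> :: "'a::topological_space \<Rightarrow> real"
  assumes "connected S" "continuous_on S \<phi>" "\<forall>x\<in>S. \<phi> x \<noteq> 0" "x \<in> S" "y \<in> S"
  shows "sgn (\<phi> x) = sgn (\<phi> y)"
proof (rule ccontr)
  assume "sgn (\<phi> x) \<noteq> sgn (\<phi> y)"
  then have "min (\<phi> x) (\<phi> y) < 0" "0 < max (\<phi> x) (\<phi> y)"
    using assms(3-5) by (auto simp: sgn_if split: if_splits)
  moreover have "connected (\<phi> ` S)"
    using assms(1,2) by (simp add: connected_continuous_image)
  moreover have "min (\<phi> x) (\<phi> y) \<in> \<phi> ` S" "max (\<phi> x) (\<phi> y) \<in> \<phi> ` S"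
    using assms(4,5) by (simp_all add: min_def max_def)
  ultimately have "0 \<in> \<phi> ` S"
    by (meson connectedD_interval less_imp_le)
  then show False using assms(3) by auto
qed

definition orthonormal_pair :: "real^3 \<Rightarrow> real^3 \<Rightarrow> bool" where
  "orthonormal_pair e n \<longleftrightarrow> e \<bullet> e = 1 \<and> n \<bullet> n = 1 \<and> e \<bullet> n = 0"

definition frame_vector :: "real^3 \<Rightarrow> real^3 \<Rightarrow> real \<Rightarrow> real \<Rightarrow> real^3" where
  "frame_vector e n \<alpha> \<beta> = cos \<beta> *\<^sub>R e + sin \<beta> *\<^sub>R (cos \<alpha> *\<^sub>R n + sin \<alpha> *\<^sub>R cross3 e n)"

lemma frame_vec_eq_frame_vector:
  "frame_vec c s \<alpha> \<beta> = frame_vector (tangent c s) (principal_normal c s) \<alpha> \<beta>"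
  by (simp add: frame_vec_def frame_vector_def binormal_def)

lemma orthonormal_pair_cross3:
  assumes "orthonormal_pair e n"
  shows "cross3 e n \<bullet> cross3 e n = 1" "e \<bullet> cross3 e n = 0" "n \<bullet> cross3 e n = 0"
  using norm_cross_dot[of e n] assms
  by (simp_all add: orthonormal_pair_def power2_norm_eq_inner norm_eq_sqrt_inner dot_cross_self)

lemma inner_frame_vector:
  assumes "orthonormal_pair e n"
  shows "e \<bullet> frame_vector e n \<alpha> \<beta> = cos \<beta>"
    and "cross3 e n \<bullet> frame_vector e n \<alpha> \<beta> = sin \<beta> * sin \<alpha>"
proof -
  have "cross3 e n \<bullet> e = 0" "cross3 e n \<bullet> n = 0"
    using orthonormal_pair_cross3[OF assms] by (simp_all add: inner_commute)
  then show "e \<bullet> frame_vector e n \<alpha> \<beta> = cos \<beta>"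
    and "cross3 e n \<bullet> frame_vector e n \<alpha> \<beta> = sin \<beta> * sin \<alpha>"
    using assms orthonormal_pair_cross3[OF assms]
    by (simp_all add: orthonormal_pair_def frame_vector_def inner_add_right)
qed

lemma frame_vector_angle_unique:
  assumes "orthonormal_pair e n" "frame_vector e n \<alpha> \<beta> = frame_vector e n \<alpha>' \<beta>'"
    and "0 < \<beta>" "\<beta> < pi" "\<bar>\<alpha>\<bar> < pi/2" "0 < \<beta>'" "\<beta>' < pi" "\<bar>\<alpha>'\<bar> < pi/2"
  shows "\<alpha> = \<alpha>'"
proof -
  have "cos \<beta> = cos \<beta>'"
    using inner_frame_vector(1)[OF assms(1), of \<alpha> \<beta>] inner_frame_vector(1)[OF assms(1), of \<alpha>' \<beta>']
      assms(2) by simp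
  moreover have "arccos (cos \<beta>) = \<beta>" "arccos (cos \<beta>') = \<beta>'"
    using assms(3,4,6,7) by (simp_all add: arccos_cos)
  ultimately have "\<beta> = \<beta>'" by metis
  moreover have "sin \<beta> * sin \<alpha> = sin \<beta>' * sin \<alpha>'"
    using inner_frame_vector(2)[OF assms(1), of \<alpha> \<beta>] inner_frame_vector(2)[OF assms(1), of \<alpha>' \<beta>']
      assms(2) by simp
  moreover have "sin \<beta> > 0"
    using assms(3,4) by (rule sin_gt_zero)
  ultimately have "sin \<alpha> = sin \<alpha>'" by (metis mult_cancel_left less_irrefl)
  moreover have "arcsin (sin \<alpha>) = \<alpha>" "arcsin (sin \<alpha>') = \<alpha>'"
    using assms(5,8) by (simp_all add: arcsin_sin)
  ultimately show ?thesis by metis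
qed

lemma inner_cross3_orthonormal_coordinates:
  assumes "orthonormal_pair e n"
  shows "e \<bullet> cross3 (x1 *\<^sub>R e + x2 *\<^sub>R n + x3 *\<^sub>R cross3 e n) (y1 *\<^sub>R e + y2 *\<^sub>R n + y3 *\<^sub>R cross3 e n)
           = x2 * y3 - x3 * y2"
proof -
  have "e \<bullet> cross3 n (cross3 e n) = 1"
    using orthonormal_pair_cross3(1)[OF assms] by (simp add: cross3_simps)
  moreover have "e \<bullet> cross3 (cross3 e n) n = -1"
    using calculation cross_skew[of "cross3 e n" n] by simp
  ultimately show ?thesis
    by (simp add: cross_add_left cross_add_right cross_mult_left cross_mult_right
        inner_add_right dot_cross_self algebra_simps)
qed

lemma frame_vector_reflect_triple_product:
  assumes "orthonormal_pair e n"
  shows "e \<bullet> cross3 (frame_vector e n \<alpha> \<beta>) (frame_vector (- e) n \<alpha>' \<beta>') =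
           - (sin \<beta> * sin \<beta>' * sin (\<alpha> + \<alpha>'))"
proof -
  have xi: "frame_vector e n \<alpha> \<beta> = cos \<beta> *\<^sub>R e + (sin \<beta> * cos \<alpha>) *\<^sub>R n + (sin \<beta> * sin \<alpha>) *\<^sub>R cross3 e n"
    and eta: "frame_vector (- e) n \<alpha>' \<beta>' =
       (- cos \<beta>') *\<^sub>R e + (sin \<beta>' * cos \<alpha>') *\<^sub>R n + (- (sin \<beta>' * sin \<alpha>')) *\<^sub>R cross3 e n"
    by (simp_all add: frame_vector_def scaleR_add_right scaleR_diff_right add.assoc)
  show ?thesis
    unfolding xi eta inner_cross3_orthonormal_coordinates[OF assms] by (simp add: sin_add algebra_simps)
qed

lemma frame_vector_reflect_triple_product_nonzero:
  assumes "orthonormal_pair e n" "0 < \<beta>" "\<beta> < pi" "0 < \<beta>'" "\<beta>' < pi"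
    and "\<bar>\<alpha>\<bar> < pi/2" "\<bar>\<alpha>'\<bar> < pi/2" "\<alpha> \<noteq> 0" "sgn \<alpha>' = sgn \<alpha>"
  shows "e \<bullet> cross3 (frame_vector e n \<alpha> \<beta>) (frame_vector (- e) n \<alpha>' \<beta>') \<noteq> 0"
proof -
  have "\<alpha> + \<alpha>' \<noteq> 0"
    using assms(8,9) by (auto simp: sgn_if split: if_splits)
  moreover have "- pi < \<alpha> + \<alpha>'" "\<alpha> + \<alpha>' < pi"
    using assms(6,7) by (auto simp: abs_less_iff)
  ultimately have "sin (\<alpha> + \<alpha>') \<noteq> 0"
    using sin_eq_0_pi by blast
  moreover have "sin \<beta> > 0" "sin \<beta>' > 0"
    using assms(2-5) by (simp_all add: sin_gt_zero)
  ultimately show ?thesis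
    unfolding frame_vector_reflect_triple_product[OF assms(1)] by simp
qed

lemma inner_cross3_nonzero_imp_independent:
  fixes x y z :: "real^3"
  assumes "x \<bullet> cross3 y z \<noteq> 0" "a *\<^sub>R y + b *\<^sub>R z = 0"
  shows "a = 0 \<and> b = 0"
proof -
  have "cross3 y z \<noteq> 0"
    using assms(1) by auto
  moreover have "a *\<^sub>R cross3 y z = 0" "b *\<^sub>R cross3 y z = 0"
    using arg_cong[OF assms(2), of "\<lambda>w. cross3 w z"] arg_cong[OF assms(2), of "cross3 y"]
    by (simp_all add: cross_add_left cross_add_right cross_mult_left cross_mult_right)
  ultimately show ?thesis by simp
qed

lemma has_vector_derivative_reflect:
  assumes "(g has_vector_derivative g') (at (- t))"
  shows "((\<lambda>x. g (- x)) has_vector_derivative - g') (at t)"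
proof -
  have "((g \<circ> uminus) has_vector_derivative (-1) *\<^sub>R g') (at t)"
    by (rule vector_diff_chain_at) (auto intro!: derivative_eq_intros assms)
  then show ?thesis by (simp add: o_def)
qed

lemma cderiv_reflect:
  assumes "open S" "smooth_curve_on S c" "- t \<in> S"
  shows "cderiv (\<lambda>x. c (- x)) t = - cderiv c (- t)"
    and "cderiv (cderiv (\<lambda>x. c (- x))) t = cderiv (cderiv c) (- t)"
proof -
  have first: "cderiv (\<lambda>x. c (- x)) y = - cderiv c (- y)" if "- y \<in> S" for y
    using has_vector_derivative_reflect[OF smooth_curve_on_derivatives(1)[OF assms(2) that]]
    by (simp add: cderiv_def vector_derivative_at)
  then show "cderiv (\<lambda>x. c (- x)) t = - cderiv c (- t)"
    using assms(3) .
  have "((\<lambda>x. - cderiv c (- x)) has_vector_derivative cderiv (cderiv c) (- t)) (at t)"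
    using has_vector_derivative_minus[OF has_vector_derivative_reflect[OF
        smooth_curve_on_derivatives(2)[OF assms(2,3)]]] by simp
  then have "(cderiv (\<lambda>x. c (- x)) has_vector_derivative cderiv (cderiv c) (- t)) (at t)"
    by (rule has_vector_derivative_transform_within_open[where S = "uminus -` S"])
      (use assms first in \<open>auto intro!: open_vimage continuous_intros\<close>)
  then show "cderiv (cderiv (\<lambda>x. c (- x))) t = cderiv (cderiv c) (- t)"
    unfolding cderiv_def[of "cderiv (\<lambda>x. c (- x))"] by (rule vector_derivative_at)
qed

lemma frenet_reflect:
  assumes "open S" "smooth_curve_on S c" "- t \<in> S"
  shows "tangent (\<lambda>x. c (- x)) t = - tangent c (- t)"
    and "principal_normal (\<lambda>x. c (- x)) t = principal_normal c (- t)"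
  using cderiv_reflect[OF assms] by (simp_all add: tangent_def principal_normal_def curvature_def)

lemma frenet_orthonormal:
  assumes "a < b" "{a..b} \<subseteq> S" "smooth_curve_on S c" "\<forall>x\<in>{a..b}. norm (cderiv c x) = 1"
    and "s \<in> {a..b}" "curvature c s \<noteq> 0"
  shows "orthonormal_pair (tangent c s) (principal_normal c s)"
proof -
  have "tangent c s \<bullet> tangent c s = 1"
    using assms(4,5) by (simp add: tangent_def norm_eq_1)
  moreover have "principal_normal c s \<bullet> principal_normal c s = 1"
    using assms(6) by (simp add: principal_normal_def curvature_def power2_norm_eq_inner[symmetric]
        power2_eq_square)
  moreover have "cderiv c s \<bullet> cderiv (cderiv c) s = 0"
    using unit_norm_orthogonal_derivative[OF assms(1,5,4)] smooth_curve_on_derivatives(2)[OF assms(3)]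
      assms(2,5) by blast
  ultimately show ?thesis
    using assms(6) by (simp add: orthonormal_pair_def tangent_def principal_normal_def curvature_def)
qed

lemma binormal_continuous_on:
  assumes "smooth_curve_on S c" "T \<subseteq> S" "\<forall>s\<in>T. curvature c s \<noteq> 0"
  shows "continuous_on T (binormal c)"
proof -
  have "continuous_on T (cderiv c)" "continuous_on T (cderiv (cderiv c))"
    using smooth_curve_on_continuous_on[OF assms(1), of 1] smooth_curve_on_continuous_on[OF assms(1), of 2]
      continuous_on_subset[OF _ assms(2)] by (simp_all add: numeral_2_eq_2)
  then show ?thesis
    using assms(3) unfolding binormal_def[abs_def] tangent_def[abs_def] principal_normal_def[abs_def]
      curvature_def by (auto intro!: continuous_intros continuous_on_cross)
qed

lemma dev_strip_ruling_continuous_on: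
  assumes "dev_strip I F"
  shows "continuous_on I (ruling F)"
proof -
  obtain U where U: "\<forall>u\<in>I. (u, 0) \<in> U" "smooth2_on U F"
    using assms unfolding dev_strip_def by blast
  have "continuous_on U (iter_partial [False] F)"
    using U(2) unfolding smooth2_on_def by blast
  then have "continuous_on U (pv F)"
    by simp
  then show ?thesis
    unfolding ruling_def[abs_def]
    by (rule continuous_on_compose2) (use U(1) in \<open>auto intro!: continuous_intros\<close>)
qed

lemma dev_strip_norm_ruling:
  assumes "dev_strip I F" "u \<in> I"
  shows "norm (ruling F u) = 1"
  using assms unfolding dev_strip_def by blast

lemma dev_strip_ruled_near_segment:
  assumes "dev_strip I F" "compact I"
  obtains d where "d > 0" "\<And>s v. s \<in> I \<Longrightarrow> \<bar>v\<bar> < d \<Longrightarrow> F (s, v) = F (s, 0) + v *\<^sub>R ruling F s"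
proof -
  obtain U where U: "open U" "\<forall>u\<in>I. (u, 0) \<in> U"
    "\<forall>u v. (u, v) \<in> U \<longrightarrow> F (u, v) = F (u, 0) + v *\<^sub>R ruling F u"
    using assms(1) unfolding dev_strip_def by blast
  have "compact ((\<lambda>u. (u, 0::real)) ` I)"
    using assms(2) by (auto intro!: compact_continuous_image continuous_intros)
  moreover have "(\<lambda>u. (u, 0::real)) ` I \<subseteq> U"
    using U(2) by blast
  ultimately obtain d where d: "d > 0" "(\<Union>x\<in>(\<lambda>u. (u, 0::real)) ` I. ball x d) \<subseteq> U"
    using compact_subset_open_imp_ball_epsilon_subset[OF _ U(1)] by blast
  show ?thesis
  proof (rule that[OF d(1)])
    fix s v
    assume "s \<in> I" "\<bar>v\<bar> < d"
    then have "(s, v) \<in> U"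
      using d(2) by (force simp: dist_Pair_Pair dist_real_def)
    then show "F (s, v) = F (s, 0) + v *\<^sub>R ruling F s"
      using U(3) by blast
  qed
qed

lemma normal_form_ruling:
  assumes "normal_form l c F" "s \<in> param_int l" "orthonormal_pair (tangent c s) (principal_normal c s)"
  obtains \<beta> where "0 < \<beta>" "\<beta> < pi" "0 < \<bar>first_angle c F s\<bar>" "\<bar>first_angle c F s\<bar> < pi/2"
    "ruling F s = frame_vec c s (first_angle c F s) \<beta>"
proof -
  obtain \<alpha> \<beta> where \<alpha>\<beta>: "0 < \<beta>" "\<beta> < pi" "0 < \<bar>\<alpha>\<bar>" "\<bar>\<alpha>\<bar> < pi/2" "ruling F s = frame_vec c s \<alpha> \<beta>"
    using assms(1,2) unfolding normal_form_def by blast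
  have "first_angle c F s = \<alpha>"
    unfolding first_angle_def
  proof (rule the_equality)
    fix \<alpha>'
    assume "\<exists>\<beta>'>0. \<beta>' < pi \<and> 0 < \<bar>\<alpha>'\<bar> \<and> \<bar>\<alpha>'\<bar> < pi/2 \<and> ruling F s = frame_vec c s \<alpha>' \<beta>'"
    then obtain \<beta>' where "0 < \<beta>'" "\<beta>' < pi" "\<bar>\<alpha>'\<bar> < pi/2" "ruling F s = frame_vec c s \<alpha>' \<beta>'"
      by blast
    then show "\<alpha>' = \<alpha>"
      using frame_vector_angle_unique[OF assms(3), of \<alpha>' \<beta>' \<alpha> \<beta>] \<alpha>\<beta>
      by (simp add: frame_vec_eq_frame_vector)
  qed (use \<alpha>\<beta> in blast)
  then show ?thesis
    using that \<alpha>\<beta> by blast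
qed

lemma normal_form_first_angle_sgn_eq:
  assumes "normal_form l c F" "\<forall>s\<in>param_int l. orthonormal_pair (tangent c s) (principal_normal c s)"
    and "continuous_on (param_int l) (binormal c)" "s \<in> param_int l" "t \<in> param_int l"
  shows "sgn (first_angle c F s) = sgn (first_angle c F t)"
proof -
  have sgn_eq: "sgn (ruling F u \<bullet> binormal c u) = sgn (first_angle c F u)" if u: "u \<in> param_int l" for u
  proof -
    note frame = assms(2)[rule_format, OF u]
    obtain \<beta> where "0 < \<beta>" "\<beta> < pi" "\<bar>first_angle c F u\<bar> < pi/2"
      and ruling: "ruling F u = frame_vec c u (first_angle c F u) \<beta>"
      using normal_form_ruling[OF assms(1) u frame] by blast
    then have "sin \<beta> > 0" "sgn (sin (first_angle c F u)) = sgn (first_angle c F u)"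
      by (simp_all add: sin_gt_zero sgn_sin)
    moreover have "ruling F u \<bullet> binormal c u = sin \<beta> * sin (first_angle c F u)"
      using inner_frame_vector(2)[OF frame] ruling
      by (simp add: frame_vec_eq_frame_vector binormal_def inner_commute)
    ultimately show ?thesis
      by (simp add: sgn_mult)
  qed
  have "continuous_on (param_int l) (\<lambda>u. ruling F u \<bullet> binormal c u)"
    using dev_strip_ruling_continuous_on assms(1,3) unfolding normal_form_def
    by (blast intro: continuous_on_inner)
  moreover have "\<forall>u\<in>param_int l. ruling F u \<bullet> binormal c u \<noteq> 0"
  proof
    fix u
    assume u: "u \<in> param_int l"
    have "0 < \<bar>first_angle c F u\<bar>"
      using normal_form_ruling[OF assms(1) u assms(2)[rule_format, OF u]] by blast
    then show "ruling F u \<bullet> binormal c u \<noteq> 0"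
      using sgn_eq[OF u] by (auto simp: sgn_0_0)
  qed
  moreover have "connected (param_int l)"
    by (simp add: param_int_def)
  ultimately have "sgn (ruling F s \<bullet> binormal c s) = sgn (ruling F t \<bullet> binormal c t)"
    using continuous_on_nonzero_sgn_eq assms(4,5) by blast
  then show ?thesis
    using sgn_eq assms(4,5) by simp
qed

lemma is_inverse_ruling_triple_product_nonzero:
  assumes "l > 0" "open S" "param_int l \<subseteq> S" "smooth_curve_on S c"
    and "\<forall>s\<in>param_int l. norm (cderiv c s) = 1" "\<forall>s\<in>param_int l. curvature c s > 0"
    and "normal_form l c F" "is_inverse l c F G" "s \<in> param_int l"
  shows "cderiv c s \<bullet> cross3 (ruling F s) (ruling G (- s)) \<noteq> 0"
proof -
  let ?c' = "\<lambda>t. c (- t)"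
  have ms: "- s \<in> param_int l"
    using assms(9) by (simp add: param_int_def)
  have frame: "orthonormal_pair (tangent c u) (principal_normal c u)" if "u \<in> param_int l" for u
    using frenet_orthonormal[of "- l / 2" "l / 2" S c u] assms(1,3-5) assms(6)[rule_format, OF that] that
    by (auto simp: param_int_def)
  have reflected: "tangent ?c' (- s) = - tangent c s" "principal_normal ?c' (- s) = principal_normal c s"
    using frenet_reflect[OF assms(2,4), of "- s"] assms(3,9) by auto
  then have frame': "orthonormal_pair (tangent ?c' (- s)) (principal_normal ?c' (- s))"
    using frame[OF assms(9)] by (simp add: orthonormal_pair_def)
  have nfG: "normal_form l ?c' G"
    and sgn_inverse: "sgn (first_angle ?c' G (- s)) = sgn (first_angle c F (- s))"
    using assms(8) ms unfolding is_inverse_def by auto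
  have "continuous_on (param_int l) (binormal c)"
    using binormal_continuous_on[OF assms(4,3)] assms(6) by force
  then have "sgn (first_angle c F (- s)) = sgn (first_angle c F s)"
    using normal_form_first_angle_sgn_eq[OF assms(7)] frame ms assms(9) by blast
  moreover obtain \<beta> where "0 < \<beta>" "\<beta> < pi" "0 < \<bar>first_angle c F s\<bar>" "\<bar>first_angle c F s\<bar> < pi/2"
    and ruling_F: "ruling F s = frame_vec c s (first_angle c F s) \<beta>"
    using normal_form_ruling[OF assms(7,9) frame[OF assms(9)]] by blast
  moreover obtain \<beta>' where "0 < \<beta>'" "\<beta>' < pi" "\<bar>first_angle ?c' G (- s)\<bar> < pi/2"
    and ruling_G: "ruling G (- s) = frame_vec ?c' (- s) (first_angle ?c' G (- s)) \<beta>'"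
    using normal_form_ruling[OF nfG ms frame'] by blast
  ultimately show ?thesis
    using frame_vector_reflect_triple_product_nonzero[OF frame[OF assms(9)]] sgn_inverse
    unfolding ruling_F ruling_G frame_vec_eq_frame_vector reflected by (simp add: tangent_def)
qed

lemma inner_derivative_zero_between:
  fixes g :: "real \<Rightarrow> 'a::real_inner"
  assumes "s \<noteq> u" "(g s - g u) \<bullet> N = 0"
    and "\<And>x. min s u \<le> x \<Longrightarrow> x \<le> max s u \<Longrightarrow> (g has_vector_derivative g' x) (at x)"
  obtains r where "min s u < r" "r < max s u" "g' r \<bullet> N = 0"
proof -
  have deriv: "((\<lambda>x. g x \<bullet> N) has_real_derivative g' x \<bullet> N) (at x)"
    if "min s u \<le> x" "x \<le> max s u" for x
  proof -
    have "((\<lambda>x. g x \<bullet> N) has_derivative (\<lambda>h. (h *\<^sub>R g' x) \<bullet> N)) (at x)"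
      using assms(3)[OF that] unfolding has_vector_derivative_def by (rule has_derivative_inner_left)
    then show ?thesis
      unfolding has_field_derivative_def by (simp add: mult.commute[of _ "g' x \<bullet> N"])
  qed
  have "min s u < max s u"
    using assms(1) by simp
  from MVT2[OF this deriv] obtain r where "min s u < r" "r < max s u"
    and "g (max s u) \<bullet> N - g (min s u) \<bullet> N = (max s u - min s u) * (g' r \<bullet> N)"
    by blast
  moreover have "g (max s u) \<bullet> N - g (min s u) \<bullet> N = 0"
    using assms(2) by (simp add: min_def max_def inner_diff_left)
  ultimately show ?thesis
    using that by simp
qed

lemma inj_on_compact_uniformly_separated:
  fixes f :: "'a::metric_space \<Rightarrow> 'b::metric_space"
  assumes "compact S" "continuous_on S f" "inj_on f S" "\<delta> > 0"
  obtains \<mu> where "\<mu> > 0" "\<And>x y. x \<in> S \<Longrightarrow> y \<in> S \<Longrightarrow> dist (f x) (f y) < \<mu> \<Longrightarrow> dist x y < \<delta>"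
proof -
  have "continuous_on (f ` S) (the_inv_into S f)"
    using continuous_on_inv[OF assms(2,1)] the_inv_into_f_f[OF assms(3)] by blast
  then have "uniformly_continuous_on (f ` S) (the_inv_into S f)"
    using compact_uniformly_continuous compact_continuous_image assms(1,2) by blast
  then obtain \<mu> where \<mu>: "\<mu> > 0"
    "\<forall>x\<in>f ` S. \<forall>x'\<in>f ` S. dist x' x < \<mu> \<longrightarrow> dist (the_inv_into S f x') (the_inv_into S f x) < \<delta>"
    using assms(4) unfolding uniformly_continuous_on_def by blast
  show ?thesis
  proof (rule that[OF \<mu>(1)])
    fix x y
    assume "x \<in> S" "y \<in> S" "dist (f x) (f y) < \<mu>"
    then show "dist x y < \<delta>"
      using \<mu>(2)[rule_format, of "f y" "f x"] the_inv_into_f_f[OF assms(3)] by simp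
  qed
qed

lemma nonzero_near_diagonal:
  fixes h :: "'a::heine_borel \<times> 'a \<times> 'a \<Rightarrow> real"
  assumes "compact I" "continuous_on (I \<times> I \<times> I) h" "\<forall>s\<in>I. h (s, s, s) \<noteq> 0"
  obtains \<delta> where "\<delta> > 0"
    "\<And>r s u. r \<in> I \<Longrightarrow> s \<in> I \<Longrightarrow> u \<in> I \<Longrightarrow> dist r s < \<delta> \<Longrightarrow> dist u s < \<delta> \<Longrightarrow> h (r, s, u) \<noteq> 0"
proof -
  let ?Z = "{p \<in> I \<times> I \<times> I. h p = 0}"
  have "compact ((\<lambda>s. (s, s, s)) ` I)"
    using assms(1) by (auto intro!: compact_continuous_image continuous_intros)
  moreover have "closed ?Z"
    using continuous_closed_preimage_constant[OF assms(2)] assms(1)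
    by (simp add: compact_imp_closed compact_Times)
  moreover have "(\<lambda>s. (s, s, s)) ` I \<inter> ?Z = {}"
    using assms(3) by auto
  ultimately obtain d where d: "d > 0" "\<forall>x\<in>(\<lambda>s. (s, s, s)) ` I. \<forall>y\<in>?Z. d \<le> dist x y"
    using separate_compact_closed by meson
  show ?thesis
  proof (rule that[of "d / 2"])
    show "d / 2 > 0"
      using d(1) by simp
    fix r s u
    assume rsu: "r \<in> I" "s \<in> I" "u \<in> I" "dist r s < d / 2" "dist u s < d / 2"
    have "dist (s, s, s) (r, s, u) \<le> dist s r + dist s u"
      using sqrt_sum_squares_le_sum_abs[of "dist s r" "dist s u"] by (simp add: dist_Pair_Pair)
    also have "\<dots> < d"
      using rsu(4,5) by (simp add: dist_commute)
    finally show "h (r, s, u) \<noteq> 0"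
      using d(2) rsu(1-3) by force
  qed
qed

lemma ruled_strips_meet_only_along_curve:
  fixes c \<xi> \<eta> :: "real \<Rightarrow> real^3"
  assumes "\<And>s. s \<in> {a..b} \<Longrightarrow> (c has_vector_derivative c' s) (at s)" "continuous_on {a..b} c'"
    and "inj_on c {a..b}" "continuous_on {a..b} \<xi>" "continuous_on {a..b} \<eta>"
    and "\<And>s. s \<in> {a..b} \<Longrightarrow> norm (\<xi> s) = 1" "\<And>s. s \<in> {a..b} \<Longrightarrow> norm (\<eta> s) = 1"
    and "\<And>s. s \<in> {a..b} \<Longrightarrow> c' s \<bullet> cross3 (\<xi> s) (\<eta> s) \<noteq> 0"
  obtains \<epsilon> where "\<epsilon> > 0"
    "\<And>s u v w. s \<in> {a..b} \<Longrightarrow> u \<in> {a..b} \<Longrightarrow> \<bar>v\<bar> < \<epsilon> \<Longrightarrow> \<bar>w\<bar> < \<epsilon> \<Longrightarrow>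
       c s + v *\<^sub>R \<xi> s = c u + w *\<^sub>R \<eta> u \<Longrightarrow> v = 0"
proof -
  let ?I = "{a..b}"
  define h where "h p = c' (fst p) \<bullet> cross3 (\<xi> (fst (snd p))) (\<eta> (snd (snd p)))"
    for p :: "real \<times> real \<times> real"
  have "continuous_on (?I \<times> ?I \<times> ?I) (\<lambda>p. c' (fst p))"
    "continuous_on (?I \<times> ?I \<times> ?I) (\<lambda>p. \<xi> (fst (snd p)))"
    "continuous_on (?I \<times> ?I \<times> ?I) (\<lambda>p. \<eta> (snd (snd p)))"
    by (auto intro!: continuous_on_compose2[OF assms(2)] continuous_on_compose2[OF assms(4)]
        continuous_on_compose2[OF assms(5)] continuous_intros)
  then have "continuous_on (?I \<times> ?I \<times> ?I) h"
    unfolding h_def by (intro continuous_on_inner continuous_on_cross)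
  then obtain \<delta> where \<delta>: "\<delta> > 0"
    "\<And>r s u. r \<in> ?I \<Longrightarrow> s \<in> ?I \<Longrightarrow> u \<in> ?I \<Longrightarrow> dist r s < \<delta> \<Longrightarrow> dist u s < \<delta> \<Longrightarrow> h (r, s, u) \<noteq> 0"
    using nonzero_near_diagonal[of ?I h] assms(8) unfolding h_def by auto
  have "continuous_on ?I c"
    using assms(1) by (meson continuous_at_imp_continuous_on has_vector_derivative_continuous)
  then obtain \<mu> where \<mu>: "\<mu> > 0" "\<And>s u. s \<in> ?I \<Longrightarrow> u \<in> ?I \<Longrightarrow> dist (c s) (c u) < \<mu> \<Longrightarrow> dist s u < \<delta>"
    using inj_on_compact_uniformly_separated[OF compact_Icc _ assms(3) \<delta>(1)] by blast
  show ?thesis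
  proof (rule that[of "\<mu> / 2"])
    show "\<mu> / 2 > 0"
      using \<mu>(1) by simp
    fix s u v w
    assume su: "s \<in> ?I" "u \<in> ?I" and vw: "\<bar>v\<bar> < \<mu> / 2" "\<bar>w\<bar> < \<mu> / 2"
      and "c s + v *\<^sub>R \<xi> s = c u + w *\<^sub>R \<eta> u"
    then have chord: "c s - c u = w *\<^sub>R \<eta> u - v *\<^sub>R \<xi> s"
      by (simp add: algebra_simps)
    have "norm (c s - c u) \<le> \<bar>w\<bar> + \<bar>v\<bar>"
      unfolding chord using norm_triangle_ineq4[of "w *\<^sub>R \<eta> u" "v *\<^sub>R \<xi> s"] assms(6,7) su by simp
    then have near: "dist s u < \<delta>"
      using \<mu>(2)[OF su] vw by (simp add: dist_norm)
    show "v = 0"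
    proof (cases "s = u")
      case True
      then have "v *\<^sub>R \<xi> s + (- w) *\<^sub>R \<eta> s = 0"
        using chord by simp
      then show ?thesis
        using inner_cross3_nonzero_imp_independent[OF assms(8)[OF su(1)]] by blast
    next
      case False
      have "(c s - c u) \<bullet> cross3 (\<xi> s) (\<eta> u) = 0"
        unfolding chord by (simp add: inner_diff_left dot_cross_self)
      moreover have "(c has_vector_derivative c' x) (at x)" if "min s u \<le> x" "x \<le> max s u" for x
        using su that by (intro assms(1)) (auto simp: min_le_iff_disj le_max_iff_disj)
      ultimately obtain r where r: "min s u < r" "r < max s u" "h (r, s, u) = 0"
        using inner_derivative_zero_between[OF False] unfolding h_def by (metis fst_conv snd_conv)
      moreover have "r \<in> ?I" "dist r s < \<delta>" "dist u s < \<delta>"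
        using r(1,2) su near by (auto simp: dist_real_def)
      ultimately show ?thesis
        using \<delta>(2) su by blast
    qed
  qed
qed

lemma normal_form_strips_intersection:
  assumes "param_int l \<subseteq> S" "smooth_curve_on S c" "inj_on c (param_int l)"
    and "normal_form l c F" "normal_form l (\<lambda>s. c (- s)) G"
    and "\<forall>s\<in>param_int l. cderiv c s \<bullet> cross3 (ruling F s) (ruling G (- s)) \<noteq> 0"
  shows "\<exists>\<epsilon>0>0. \<forall>\<epsilon>. 0 < \<epsilon> \<and> \<epsilon> < \<epsilon>0 \<longrightarrow> F ` Omega l \<epsilon> \<inter> G ` Omega l \<epsilon> = c ` param_int l"
proof -
  let ?I = "param_int l"
  have I: "?I = {- l / 2..l / 2}"
    by (simp add: param_int_def)
  have reflect: "- s \<in> ?I" if "s \<in> ?I" for s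
    using that by (auto simp: param_int_def)
  have F: "dev_strip ?I F" "\<And>s. s \<in> ?I \<Longrightarrow> F (s, 0) = c s"
    and G: "dev_strip ?I G" "\<And>s. s \<in> ?I \<Longrightarrow> G (s, 0) = c (- s)"
    using assms(4,5) unfolding normal_form_def by blast+
  obtain dF where dF: "dF > 0" "\<And>s v. s \<in> ?I \<Longrightarrow> \<bar>v\<bar> < dF \<Longrightarrow> F (s, v) = c s + v *\<^sub>R ruling F s"
    using dev_strip_ruled_near_segment[OF F(1)] F(2) by (metis I compact_Icc)
  obtain dG where dG: "dG > 0" "\<And>s v. s \<in> ?I \<Longrightarrow> \<bar>v\<bar> < dG \<Longrightarrow> G (s, v) = c (- s) + v *\<^sub>R ruling G s"
    using dev_strip_ruled_near_segment[OF G(1)] G(2) by (metis I compact_Icc)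
  have "continuous_on ?I (\<lambda>u. ruling G (- u))"
    by (rule continuous_on_compose2[OF dev_strip_ruling_continuous_on[OF G(1)]])
      (auto intro!: continuous_intros reflect)
  moreover have "continuous_on ?I (cderiv c)"
    using smooth_curve_on_continuous_on[OF assms(2), of 1] continuous_on_subset assms(1) by auto
  ultimately obtain \<epsilon>1 where \<epsilon>1: "\<epsilon>1 > 0"
    "\<And>s u v w. s \<in> ?I \<Longrightarrow> u \<in> ?I \<Longrightarrow> \<bar>v\<bar> < \<epsilon>1 \<Longrightarrow> \<bar>w\<bar> < \<epsilon>1 \<Longrightarrow>
       c s + v *\<^sub>R ruling F s = c u + w *\<^sub>R ruling G (- u) \<Longrightarrow> v = 0"
    using ruled_strips_meet_only_along_curve[of "- l / 2" "l / 2" c "cderiv c" "ruling F" "\<lambda>u. ruling G (- u)"]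
      smooth_curve_on_derivatives(1)[OF assms(2)] assms(1,3,6) dev_strip_ruling_continuous_on[OF F(1)]
      dev_strip_norm_ruling[OF F(1)] dev_strip_norm_ruling[OF G(1)] reflect
    unfolding I by blast
  define \<epsilon>0 where "\<epsilon>0 = min \<epsilon>1 (min dF dG)"
  have Omega_iff: "(s, v) \<in> Omega l \<epsilon> \<longleftrightarrow> s \<in> ?I \<and> \<bar>v\<bar> < \<epsilon>" for s v \<epsilon>
    by (auto simp: Omega_def)
  have "F ` Omega l \<epsilon> \<inter> G ` Omega l \<epsilon> = c ` ?I" if \<epsilon>: "0 < \<epsilon>" "\<epsilon> < \<epsilon>0" for \<epsilon>
  proof (intro equalityI subsetI)
    fix x
    assume "x \<in> c ` ?I"
    then obtain s where "s \<in> ?I" "x = c s"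
      by blast
    then have "x = F (s, 0)" "(s, 0) \<in> Omega l \<epsilon>" "x = G (- s, 0)" "(- s, 0) \<in> Omega l \<epsilon>"
      using F(2) G(2) reflect \<epsilon>(1) Omega_iff by auto
    then show "x \<in> F ` Omega l \<epsilon> \<inter> G ` Omega l \<epsilon>"
      by blast
  next
    fix x
    assume "x \<in> F ` Omega l \<epsilon> \<inter> G ` Omega l \<epsilon>"
    then obtain s v t w where sv: "s \<in> ?I" "\<bar>v\<bar> < \<epsilon>" "x = F (s, v)"
      and tw: "t \<in> ?I" "\<bar>w\<bar> < \<epsilon>" "x = G (t, w)"
      using Omega_iff by force
    then have "x = c s + v *\<^sub>R ruling F s" "x = c (- t) + w *\<^sub>R ruling G (- (- t))"
      using dF(2) dG(2) \<epsilon> by (auto simp: \<epsilon>0_def)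
    then have "v = 0"
      using \<epsilon>1(2)[of s "- t" v w] sv tw reflect \<epsilon> by (auto simp: \<epsilon>0_def)
    then show "x \<in> c ` ?I"
      using \<open>x = c s + v *\<^sub>R ruling F s\<close> sv(1) by simp
  qed
  moreover have "\<epsilon>0 > 0"
    using \<epsilon>1(1) dF(1) dG(1) by (simp add: \<epsilon>0_def)
  ultimately show ?thesis
    by blast
qed

theorem proposition3p4:
  fixes l :: real and c :: "real \<Rightarrow> real^3" and S :: "real set"
    and F Fs :: "real \<times> real \<Rightarrow> real^3"
  assumes "l > 0"
    and "open S" and "param_int l \<subseteq> S" and "smooth_curve_on S c"
    and "\<forall>s\<in>param_int l. norm (cderiv c s) = 1"
    and "\<forall>s\<in>param_int l. curvature c s > 0"
    and "inj_on c (param_int l)"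
    and "normal_form l c F" and "admissible l c F"
    and "is_inverse l c F Fs"
  shows "(\<forall>s\<in>param_int l. \<forall>a b::real.
            a *\<^sub>R ruling F s + b *\<^sub>R ruling Fs (- s) = 0 \<longrightarrow> a = 0 \<and> b = 0) \<and>
         (\<exists>\<epsilon>0>0. \<forall>\<epsilon>. 0 < \<epsilon> \<and> \<epsilon> < \<epsilon>0 \<longrightarrow>
            F ` Omega l \<epsilon> \<inter> Fs ` Omega l \<epsilon> = c ` param_int l)"
proof
  have triple_product: "\<forall>s\<in>param_int l. cderiv c s \<bullet> cross3 (ruling F s) (ruling Fs (- s)) \<noteq> 0"
    using is_inverse_ruling_triple_product_nonzero[OF assms(1-6,8,10)] by blast
  then show "\<forall>s\<in>param_int l. \<forall>a b::real.
      a *\<^sub>R ruling F s + b *\<^sub>R ruling Fs (- s) = 0 \<longrightarrow> a = 0 \<and> b = 0"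
    using inner_cross3_nonzero_imp_independent by blast
  have "normal_form l (\<lambda>s. c (- s)) Fs"
    using assms(10) by (simp add: is_inverse_def)
  then show "\<exists>\<epsilon>0>0. \<forall>\<epsilon>. 0 < \<epsilon> \<and> \<epsilon> < \<epsilon>0 \<longrightarrow> F ` Omega l \<epsilon> \<inter> Fs ` Omega l \<epsilon> = c ` param_int l"
    using normal_form_strips_intersection[OF assms(3,4,7,8)] triple_product by blast
qed

end
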